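(* Let $r\ge 1$ be an integer, let $k_1,\dots,k_r$ be integers, and let $a,b>0$ with $ab\neq \pm 1$. Then for every integer $n\ge 0$, $$\mathbf{E}_{n}^{(k_1,\dots,k_r)}(a,b)=\mathbf{E}_{n}^{(k_1,\dots,k_r)}\!\left(\frac{\ln a}{\ln a+\ln b}\right)(\ln a+\ln b)^n .$$
   Context: For integers $k_1,\dots,k_r$, the multi-polylogarithm is $Li_{(k_1,\dots,k_r)}(z)=\sum_{0<m_1<m_2<\dots<m_r}\frac{z^{m_r}}{m_1^{k_1}m_2^{k_2}\cdots m_r^{k_r}}$ (sum over integers). For $c>0$, $c^t:=e^{t\ln c}$. The Multi Poly-Euler polynomials $\mathbf{E}_n^{(k_1,\dots,k_r)}(x)$ are defined by the generating series $$\frac{2Li_{(k_1,\dots,k_r)}(1-e^{-t})}{(1+e^t)^r}e^{rxt}=\sum_{n=0}^{\infty}\mathbf{E}_{n}^{(k_1,\dots,k_r)}(x)\frac{t^n}{n!}.$$ The generalized Multi Poly-Euler polynomials with parameters $a,b$ are defined by $$\frac{2Li_{(k_1,\dots,k_r)}(1-(ab)^{-t})}{(a^{-t}+b^t)^r}e^{rxt}=\sum_{n=0}^{\infty}\mathbf{E}_{n}^{(k_1,\dots,k_r)}(x;a,b)\frac{t^n}{n!},$$ and $\mathbf{E}_{n}^{(k_1,\dots,k_r)}(a,b):=\mathbf{E}_{n}^{(k_1,\dots,k_r)}(0;a,b)$. *)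

theory Defs
  imports "HOL-Analysis.Analysis" "HOL-Computational_Algebra.Formal_Power_Series"
begin

text \<open>Coefficient of z^m in the multi-polylogarithm Li_(k_1,...,k_r)(z):
  sum over 0 < m_1 < ... < m_r = m of 1/(m_1^k_1 ... m_r^k_r).
  The index list ks = [k_1,...,k_r]; tuples (m_1,...,m_r) are lists.\<close>
definition mpl_coeff :: "int list \<Rightarrow> nat \<Rightarrow> real" where
  "mpl_coeff ks m =
     (\<Sum>ms \<in> {ms. length ms = length ks \<and> sorted_wrt (<) ms \<and> (\<forall>x\<in>set ms. 0 < x)
                  \<and> last ms = m}.
        1 / (\<Prod>i<length ks. real (ms ! i) powi (ks ! i)))"

definition mpl_fps :: "int list \<Rightarrow> real fps" where
  "mpl_fps ks = Abs_fps (mpl_coeff ks)"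

definition multi_poly_euler :: "int list \<Rightarrow> real \<Rightarrow> nat \<Rightarrow> real" where
  "multi_poly_euler ks x n =
     fact n * fps_nth
       (2 * (mpl_fps ks oo (1 - fps_exp (-1)))
          * inverse ((1 + fps_exp 1) ^ length ks)
          * fps_exp (real (length ks) * x)) n"

text \<open>Generalized Multi Poly-Euler polynomial E_n^(ks)(x;a,b): generating series
  2 Li_ks(1 - (ab)^{-t}) / (a^{-t} + b^t)^r * e^{r x t}, with c^t = e^{t ln c}.\<close>
definition multi_poly_euler_gen :: "int list \<Rightarrow> real \<Rightarrow> real \<Rightarrow> real \<Rightarrow> nat \<Rightarrow> real" where
  "multi_poly_euler_gen ks x a b n =
     fact n * fps_nth
       (2 * (mpl_fps ks oo (1 - fps_exp (- ln (a * b))))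
          * inverse ((fps_exp (- ln a) + fps_exp (ln b)) ^ length ks)
          * fps_exp (real (length ks) * x)) n"

end

theory Submission
  imports Defs
begin

text \<open>Put \<open>c = ln a + ln b = ln (a b)\<close>. Then \<open>(a b)^(-t) = e^(-c t)\<close> and
  \<open>a^(-t) + b^t = e^(-t ln a) (1 + e^(c t))\<close>, so the generating series of the generalized
  polynomials at \<open>x\<close> is the ordinary one at \<open>(x + ln a) / c\<close> with \<open>t\<close> replaced by \<open>c t\<close>,
  and this substitution multiplies the \<open>n\<close>-th coefficient by \<open>c^n\<close>.\<close>

definition multi_poly_euler_fps :: "int list \<Rightarrow> real \<Rightarrow> real fps" where
  "multi_poly_euler_fps ks x =
     2 * (mpl_fps ks oo (1 - fps_exp (-1)))
       * inverse ((1 + fps_exp 1) ^ length ks)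
       * fps_exp (real (length ks) * x)"

definition multi_poly_euler_gen_fps :: "int list \<Rightarrow> real \<Rightarrow> real \<Rightarrow> real \<Rightarrow> real fps" where
  "multi_poly_euler_gen_fps ks x a b =
     2 * (mpl_fps ks oo (1 - fps_exp (- ln (a * b))))
       * inverse ((fps_exp (- ln a) + fps_exp (ln b)) ^ length ks)
       * fps_exp (real (length ks) * x)"

lemma multi_poly_euler_eq_fps_nth:
  "multi_poly_euler ks x n = fact n * fps_nth (multi_poly_euler_fps ks x) n"
  by (simp add: multi_poly_euler_def multi_poly_euler_fps_def)

lemma multi_poly_euler_gen_eq_fps_nth:
  "multi_poly_euler_gen ks x a b n = fact n * fps_nth (multi_poly_euler_gen_fps ks x a b) n"
  by (simp add: multi_poly_euler_gen_def multi_poly_euler_gen_fps_def)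

lemma fps_exp_add_fps_exp:
  "fps_exp u + fps_exp v = fps_exp u * (1 + fps_exp (v - u :: 'a :: field_char_0))"
  by (simp add: distrib_left fps_exp_add_mult[symmetric])

lemma multi_poly_euler_fps_compose_linear:
  "multi_poly_euler_fps ks x oo (fps_const c * fps_X) =
     2 * (mpl_fps ks oo (1 - fps_exp (- c)))
       * inverse ((1 + fps_exp c) ^ length ks)
       * fps_exp (real (length ks) * (c * x))"
proof -
  let ?L = "fps_const c * fps_X :: real fps"
  have L0: "fps_nth ?L 0 = 0" by simp
  have A0: "fps_nth (1 - fps_exp (-1) :: real fps) 0 = 0" by simp
  have P0: "fps_nth ((1 + fps_exp 1) ^ length ks :: real fps) 0 \<noteq> 0"
    by (simp add: fps_nth_power_0)
  have "multi_poly_euler_fps ks x oo ?L =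
          2 * ((mpl_fps ks oo (1 - fps_exp (-1))) oo ?L)
            * (inverse ((1 + fps_exp 1) ^ length ks) oo ?L)
            * (fps_exp (real (length ks) * x) oo ?L)"
    by (simp add: multi_poly_euler_fps_def fps_compose_mult_distrib[OF L0])
  also have "(mpl_fps ks oo (1 - fps_exp (-1))) oo ?L = mpl_fps ks oo (1 - fps_exp (- c))"
    by (simp add: fps_compose_assoc[OF L0 A0, symmetric] fps_compose_sub_distrib)
  also have "inverse ((1 + fps_exp 1) ^ length ks) oo ?L = inverse ((1 + fps_exp c) ^ length ks)"
    by (simp add: fps_inverse_compose[OF L0 P0] fps_compose_power[symmetric]
        fps_compose_add_distrib)
  finally show ?thesis by (simp add: mult.left_commute)
qed

lemma multi_poly_euler_gen_fps_eq_compose: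
  assumes "a > 0" "b > 0" "ln a + ln b \<noteq> 0"
  shows "multi_poly_euler_gen_fps ks x a b =
           multi_poly_euler_fps ks ((x + ln a) / (ln a + ln b))
             oo (fps_const (ln a + ln b) * fps_X)"
proof -
  define c where "c = ln a + ln b"
  have "fps_exp (- ln a) + fps_exp (ln b) = fps_exp (- ln a) * (1 + fps_exp c :: real fps)"
    by (simp add: fps_exp_add_fps_exp c_def)
  then have "inverse ((fps_exp (- ln a) + fps_exp (ln b)) ^ length ks)
        = fps_exp (real (length ks) * ln a) * inverse ((1 + fps_exp c) ^ length ks)"
    by (simp add: power_mult_distrib fps_inverse_mult fps_inverse_power
        fps_exp_neg[symmetric] fps_exp_power_mult)
  moreover have "c * ((x + ln a) / c) = x + ln a"
    using assms(3) by (simp add: c_def)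
  moreover have "ln (a * b) = c"
    using assms(1,2) by (simp add: c_def ln_mult)
  ultimately show ?thesis
    unfolding c_def[symmetric] multi_poly_euler_fps_compose_linear
    by (simp add: multi_poly_euler_gen_fps_def distrib_left fps_exp_add_mult[symmetric]
        mult_ac)
qed

theorem multi_poly_euler_gen_eq_scaled:
  assumes "a > 0" "b > 0" "ln a + ln b \<noteq> 0"
  shows "multi_poly_euler_gen ks x a b n =
           multi_poly_euler ks ((x + ln a) / (ln a + ln b)) n * (ln a + ln b) ^ n"
  using assms
  by (simp add: multi_poly_euler_gen_eq_fps_nth multi_poly_euler_eq_fps_nth
      multi_poly_euler_gen_fps_eq_compose)

theorem theorem1:
  fixes ks :: "int list" and a b :: real and n :: nat
  assumes "length ks \<ge> 1" and "a > 0" and "b > 0"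
    and "a * b \<noteq> 1" and "a * b \<noteq> -1"
  shows "multi_poly_euler_gen ks 0 a b n
         = multi_poly_euler ks (ln a / (ln a + ln b)) n * (ln a + ln b) ^ n"
proof -
  have "ln a + ln b = ln (a * b)" using assms(2,3) by (simp add: ln_mult)
  also have "\<dots> \<noteq> 0" using assms(2-4) by simp
  finally show ?thesis
    using multi_poly_euler_gen_eq_scaled[OF assms(2,3)] by simp
qed

end
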